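(* Let $\mu$ be strict and $\alpha\in\mathcal Q(\mu,\overline\mu)$, and let $m=m(\alpha)$. Then $\alpha$ can be written uniquely as $$\alpha=(b_1^m,b_2,b_3,\ldots)+(w^m)$$ with $w\ge0$, $b_1>b_2$, and $(b_1^m,b_2,b_3,\ldots)\in\mathcal Q(\mu,\mu+(1))$.
   Context: Partitions are weakly decreasing sequences of nonnegative integers with finitely many nonzero parts, identified with Ferrers boards. $\alpha$ contains $\mu$ if deleting some rows and some columns of the Ferrers board of $\alpha$ and top/left-justifying yields $\mu$; otherwise $\alpha$ avoids $\mu$. Strict: positive parts distinct. $m(\alpha)$ is the multiplicity of the largest part of $\alpha$. $\alpha+\beta$ is the componentwise sum; $(w^m)$ has $m$ parts equal to $w$. $\overline\mu=(\mu_1+1,\mu_1,\mu_2,\ldots)$. $\mathcal Q(\tau,\mu)$ is the set of partitions of positive weight containing $\tau$ and avoiding $\mu$. *)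

theory Defs
  imports Main
begin

text \<open>Partitions are represented as functions nat => nat (part i = the (i+1)-st part),
  weakly decreasing with finitely many nonzero parts.\<close>

definition partition :: "(nat \<Rightarrow> nat) \<Rightarrow> bool" where
  "partition a \<longleftrightarrow> (\<forall>i j. i \<le> j \<longrightarrow> a j \<le> a i) \<and> finite {i. a i \<noteq> 0}"

definition strict :: "(nat \<Rightarrow> nat) \<Rightarrow> bool" where
  "strict a \<longleftrightarrow> (\<forall>i j. i \<noteq> j \<and> 0 < a i \<and> 0 < a j \<longrightarrow> a i \<noteq> a j)"

definition weight :: "(nat \<Rightarrow> nat) \<Rightarrow> nat" where
  "weight a = (\<Sum>i\<in>{i. a i \<noteq> 0}. a i)"

definition board :: "(nat \<Rightarrow> nat) \<Rightarrow> (nat \<times> nat) set" where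
  "board a = {(i, j). j < a i}"

text \<open>Keep rows R and columns C (delete the others) and top/left-justify.\<close>
definition contains :: "(nat \<Rightarrow> nat) \<Rightarrow> (nat \<Rightarrow> nat) \<Rightarrow> bool" where
  "contains a u \<longleftrightarrow> (\<exists>R C :: nat set.
     (\<lambda>(i, j). (card {r\<in>R. r < i}, card {c\<in>C. c < j})) ` (board a \<inter> (R \<times> C)) = board u)"

definition Q :: "(nat \<Rightarrow> nat) \<Rightarrow> (nat \<Rightarrow> nat) \<Rightarrow> (nat \<Rightarrow> nat) set" where
  "Q t u = {a. partition a \<and> 0 < weight a \<and> contains a t \<and> \<not> contains a u}"

definition mult :: "(nat \<Rightarrow> nat) \<Rightarrow> nat" where
  "mult a = card {i. a i = a 0}"

definition psum :: "(nat \<Rightarrow> nat) \<Rightarrow> (nat \<Rightarrow> nat) \<Rightarrow> (nat \<Rightarrow> nat)" where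
  "psum a b = (\<lambda>i. a i + b i)"

definition rect :: "nat \<Rightarrow> nat \<Rightarrow> (nat \<Rightarrow> nat)" where
  "rect w m = (\<lambda>i. if i < m then w else 0)"

definition bar :: "(nat \<Rightarrow> nat) \<Rightarrow> (nat \<Rightarrow> nat)" where
  "bar u = (\<lambda>i. if i = 0 then u 0 + 1 else u (i - 1))"

end

theory Submission
  imports Defs
begin

text \<open>
  A strict partition \<open>u\<close> is contained in \<open>a\<close> exactly when there are parts
  \<open>x\<^sub>0 \<ge> x\<^sub>1 \<ge> \<dots>\<close> of \<open>a\<close> (zero allowed) whose drops dominate those of \<open>u\<close>,
  \<open>x\<^sub>i - x\<^sub>i\<^sub>+\<^sub>1 \<ge> u\<^sub>i - u\<^sub>i\<^sub>+\<^sub>1\<close>: the rows carrying the \<open>x\<^sub>i\<close> together with a suitable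
  set of columns cut \<open>u\<close> out of the Ferrers board of \<open>a\<close>.

  With \<open>m = m(a)\<close>, a decomposition \<open>a = (b\<^sub>1\<^sup>m, b\<^sub>2, \<dots>) + (w\<^sup>m)\<close> is determined by its
  level \<open>v = b\<^sub>1\<close>, with \<open>a\<^sub>m < v \<le> a\<^sub>0\<close>; write \<open>a[v]\<close> for \<open>a\<close> with its first \<open>m\<close> parts
  replaced by \<open>v\<close>. A chain for \<open>u\<close> in \<open>a[v]\<close> becomes a chain for \<open>u + (1)\<close> in \<open>a[v+1]\<close>,
  and conversely a chain for \<open>u + (1)\<close> in \<open>a[v+1]\<close> gives one for \<open>u\<close> in \<open>a[v]\<close>, or,
  when \<open>v = a\<^sub>m\<close>, one for \<open>bar u\<close> in \<open>a\<close> itself. So the admissible level is the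
  least \<open>v\<close> for which \<open>a[v]\<close> still contains \<open>u\<close>: it exists because \<open>a = a[a\<^sub>0]\<close>
  contains \<open>u\<close> and avoids \<open>bar u\<close>, and it is unique because containing \<open>u + (1)\<close> is
  monotone in \<open>v\<close>.
\<close>

lemma partition_antimono: "partition a \<Longrightarrow> i \<le> j \<Longrightarrow> a j \<le> a i"
  unfolding partition_def by blast

lemma partition_zero_beyond: "partition a \<Longrightarrow> \<exists>i\<ge>m. a i = 0"
proof (rule ccontr)
  assume p: "partition a" and "\<not> (\<exists>i\<ge>m. a i = 0)"
  then have "{m..} \<subseteq> {i. a i \<noteq> 0}" by auto
  moreover have "finite {i. a i \<noteq> 0}" using p by (simp add: partition_def)
  ultimately show False using finite_subset infinite_Ici by blast
qed

lemma partition_eventually_zero: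
  assumes "partition u" obtains N where "\<And>i. N \<le> i \<Longrightarrow> u i = 0"
  using partition_zero_beyond[OF assms, of 0] partition_antimono[OF assms] by (metis le0 le_zero_eq)

section \<open>Selecting rows and columns\<close>

definition count_below :: "nat set \<Rightarrow> nat \<Rightarrow> nat" where
  "count_below C y = card {c\<in>C. c < y}"

lemma finite_below: "finite {c\<in>C. c < (y::nat)}"
  by (rule finite_subset[of _ "{..<y}"]) auto

lemma count_below_Suc:
  "count_below C (Suc y) = (if y \<in> C then Suc (count_below C y) else count_below C y)"
proof -
  have "{c\<in>C. c < Suc y} = (if y \<in> C then insert y {c\<in>C. c < y} else {c\<in>C. c < y})"
    using less_Suc_eq by auto
  then show ?thesis using finite_below[of C y] by (simp add: count_below_def)
qed

lemma count_below_le: "count_below C y \<le> y"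
  unfolding count_below_def by (rule card_mono[of "{..<y}", simplified]) auto

lemma count_below_mono: "y \<le> y' \<Longrightarrow> count_below C y \<le> count_below C y'"
  unfolding count_below_def by (rule card_mono[OF finite_below]) auto

lemma count_below_strict_mono: "r \<in> R \<Longrightarrow> r < r' \<Longrightarrow> count_below R r < count_below R r'"
  unfolding count_below_def by (rule psubset_card_mono[OF finite_below]) auto

lemma count_below_diff_le: "y \<le> y' \<Longrightarrow> count_below C y' \<le> count_below C y + (y' - y)"
proof -
  assume "y \<le> y'"
  have "{c\<in>C. c < y'} \<subseteq> {c\<in>C. c < y} \<union> {y..<y'}" by auto
  then have "card {c\<in>C. c < y'} \<le> card ({c\<in>C. c < y} \<union> {y..<y'})"
    by (intro card_mono) (auto simp: finite_below)
  also have "\<dots> \<le> card {c\<in>C. c < y} + card {y..<y'}" by (rule card_Un_le)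
  finally show ?thesis by (simp add: count_below_def)
qed

lemma count_below_image: "count_below C ` {c\<in>C. c < y} = {..<count_below C y}"
proof (induction y)
  case 0
  then show ?case by (simp add: count_below_def)
next
  case (Suc y)
  have "{c\<in>C. c < Suc y} = (if y \<in> C then insert y {c\<in>C. c < y} else {c\<in>C. c < y})"
    using less_Suc_eq by auto
  then show ?case using Suc by (simp add: count_below_Suc lessThan_Suc)
qed

lemma count_below_image_strict_mono:
  assumes mono: "strict_mono_on S r" and down: "\<And>i j. i \<le> j \<Longrightarrow> j \<in> S \<Longrightarrow> i \<in> S"
    and i: "i \<in> S"
  shows "count_below (r ` S) (r i) = i"
proof -
  have "{r'\<in>r ` S. r' < r i} = r ` {..<i}"
  proof (intro equalityI subsetI)
    fix r' assume "r' \<in> {r'\<in>r ` S. r' < r i}"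
    then obtain j where j: "j \<in> S" "r' = r j" "r j < r i" by auto
    have "j < i"
    proof (rule ccontr)
      assume "\<not> j < i"
      then have "i < j \<or> i = j" by auto
      then have "r i \<le> r j" using mono i j(1) by (auto dest: strict_mono_onD)
      then show False using j(3) by simp
    qed
    then show "r' \<in> r ` {..<i}" using j(2) by simp
  next
    fix r' assume "r' \<in> r ` {..<i}"
    then obtain j where "j < i" "r' = r j" by auto
    then show "r' \<in> {r'\<in>r ` S. r' < r i}"
      using down[of j i] i mono by (auto intro: strict_mono_onD)
  qed
  moreover have "strict_mono_on {..<i} r"
    using mono down[of _ i] i by (auto simp: strict_mono_on_def)
  then have "inj_on r {..<i}" by (rule strict_mono_on_imp_inj_on)
  ultimately show ?thesis by (simp add: count_below_def card_image)
qed

lemma count_below_jumps: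
  assumes "f 0 = 0" and "\<And>y. f y \<le> f (Suc y) \<and> f (Suc y) \<le> Suc (f y)"
  shows "count_below {c. f (Suc c) = Suc (f c)} y = f y"
proof (induction y)
  case 0 then show ?case using assms(1) by (simp add: count_below_def)
next
  case (Suc y) then show ?case using assms(2)[of y] by (auto simp: count_below_Suc)
qed

lemma embedded_row_length:
  assumes E: "(\<lambda>(i, j). (count_below R i, count_below C j)) ` (board a \<inter> (R \<times> C)) = board u"
    and r: "r \<in> R"
  shows "count_below C (a r) = u (count_below R r)"
proof -
  let ?emb = "\<lambda>(i, j). (count_below R i, count_below C j)"
  have inj: "inj_on (count_below R) R"
    by (intro inj_onI) (metis count_below_strict_mono less_irrefl nat_neq_iff)
  have "{..<u (count_below R r)} = {j. (count_below R r, j) \<in> board u}" by (auto simp: board_def)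
  also have "\<dots> = count_below C ` {c\<in>C. c < a r}"
  proof (intro equalityI subsetI)
    fix j assume "j \<in> {j. (count_below R r, j) \<in> board u}"
    then have "(count_below R r, j) \<in> ?emb ` (board a \<inter> (R \<times> C))" using E by simp
    then obtain r' c where h: "r' \<in> R" "c \<in> C" "c < a r'" "count_below R r' = count_below R r"
        "count_below C c = j"
      by (auto simp: board_def)
    then have "r' = r" using r inj by (metis inj_on_eq_iff)
    then show "j \<in> count_below C ` {c\<in>C. c < a r}" using h by auto
  next
    fix j assume "j \<in> count_below C ` {c\<in>C. c < a r}"
    then obtain c where h: "c \<in> C" "c < a r" "j = count_below C c" by auto
    then have "(r, c) \<in> board a \<inter> (R \<times> C)" using r by (auto simp: board_def)
    then have "(count_below R r, count_below C c) \<in> board u" using E by force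
    then show "j \<in> {j. (count_below R r, j) \<in> board u}" using h by simp
  qed
  also have "\<dots> = {..<count_below C (a r)}" by (rule count_below_image)
  finally show ?thesis by simp
qed

lemma contains_imp_rows_columns:
  assumes "contains a u"
  shows "\<exists>r C. strict_mono_on {i. 0 < u i} r \<and> (\<forall>i. 0 < u i \<longrightarrow> count_below C (a (r i)) = u i)"
proof -
  obtain R C where E: "(\<lambda>(i, j). (count_below R i, count_below C j)) ` (board a \<inter> (R \<times> C)) = board u"
    using assms unfolding contains_def count_below_def by blast
  have "\<exists>r\<in>R. count_below R r = i" if "0 < u i" for i
  proof -
    have "(i, 0) \<in> board u" using that by (simp add: board_def)
    then show ?thesis unfolding E[symmetric] by auto
  qed
  then obtain r where r: "\<And>i. 0 < u i \<Longrightarrow> r i \<in> R \<and> count_below R (r i) = i" by metis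
  have "count_below C (a (r i)) = u i" if "0 < u i" for i
    using embedded_row_length[OF E, of "r i"] r[OF that] by simp
  moreover have "strict_mono_on {i. 0 < u i} r"
  proof (rule strict_mono_onI)
    fix i j assume "i \<in> {i. 0 < u i}" "j \<in> {i. 0 < u i}" "i < j"
    then show "r i < r j" using r count_below_mono[of "r j" "r i" R] by force
  qed
  ultimately show ?thesis by blast
qed

lemma rows_columns_imp_contains:
  assumes pu: "partition u" and r: "strict_mono_on {i. 0 < u i} r"
    and C: "\<And>i. 0 < u i \<Longrightarrow> count_below C (a (r i)) = u i"
  shows "contains a u"
proof -
  define R where "R = r ` {i. 0 < u i}"
  have rank: "count_below R (r i) = i" if "0 < u i" for i
    unfolding R_def using r partition_antimono[OF pu] that
    by (intro count_below_image_strict_mono) (auto intro: less_le_trans)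
  let ?emb = "\<lambda>(i, j). (count_below R i, count_below C j)"
  have "?emb ` (board a \<inter> (R \<times> C)) = board u"
  proof (intro equalityI subsetI)
    fix p assume "p \<in> ?emb ` (board a \<inter> (R \<times> C))"
    then obtain i c where h: "0 < u i" "c \<in> C" "c < a (r i)" "p = (i, count_below C c)"
      using rank by (auto simp: board_def R_def)
    then have "count_below C c < u i" using count_below_image[of C "a (r i)"] C[OF h(1)] by auto
    then show "p \<in> board u" using h by (simp add: board_def)
  next
    fix p assume "p \<in> board u"
    then obtain i j where p: "p = (i, j)" "j < u i" by (auto simp: board_def)
    then have ui: "0 < u i" by simp
    have "j \<in> count_below C ` {c\<in>C. c < a (r i)}"
      using p count_below_image[of C "a (r i)"] C[OF ui] by simp
    then obtain c where c: "c \<in> C" "c < a (r i)" "j = count_below C c" by auto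
    then have "(r i, c) \<in> board a \<inter> (R \<times> C)" using ui by (auto simp: board_def R_def)
    moreover have "p = ?emb (r i, c)" using p c rank[OF ui] by simp
    ultimately show "p \<in> ?emb ` (board a \<inter> (R \<times> C))" by blast
  qed
  then show ?thesis unfolding contains_def count_below_def by blast
qed

section \<open>Gap chains\<close>

definition gaps_dominate :: "(nat \<Rightarrow> nat) \<Rightarrow> (nat \<Rightarrow> nat) \<Rightarrow> bool" where
  "gaps_dominate x u \<longleftrightarrow> (\<forall>i. x (Suc i) + u i \<le> x i + u (Suc i))"

definition gap_chain :: "(nat \<Rightarrow> nat) \<Rightarrow> (nat \<Rightarrow> nat) \<Rightarrow> bool" where
  "gap_chain a u \<longleftrightarrow> (\<exists>x. range x \<subseteq> range a \<and> gaps_dominate x u)"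

lemma gaps_dominateD: "gaps_dominate x u \<Longrightarrow> x (Suc i) + u i \<le> x i + u (Suc i)"
  by (simp add: gaps_dominate_def)

lemma gaps_dominate_telescope:
  assumes "gaps_dominate x u" and "j \<le> i"
  shows "x i + u j \<le> x j + u i"
  using assms(2)
proof (induction i rule: dec_induct)
  case (step n)
  moreover have "x (Suc n) + u n \<le> x n + u (Suc n)" by (rule gaps_dominateD[OF assms(1)])
  ultimately show ?case by linarith
qed simp

lemma gaps_dominate_antimono:
  "partition u \<Longrightarrow> gaps_dominate x u \<Longrightarrow> j \<le> i \<Longrightarrow> x i \<le> x j"
  using gaps_dominate_telescope[of x u j i] partition_antimono[of u j i] by linarith

lemma gaps_dominate_ge:
  assumes pu: "partition u" and x: "gaps_dominate x u"
  shows "u i \<le> x i"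
proof -
  obtain k where k: "k \<ge> i" "u k = 0" using partition_zero_beyond[OF pu] by blast
  show ?thesis using gaps_dominate_telescope[OF x k(1)] k(2) by simp
qed

lemma gaps_dominate_strict:
  assumes pu: "partition u" and su: "strict u" and x: "gaps_dominate x u" and "i < j" "0 < u j"
  shows "x j < x i"
proof -
  have "0 < u i" using partition_antimono[OF pu, of i j] assms(4,5) by simp
  then have "u i \<noteq> u j" using su assms(4,5) unfolding strict_def by simp
  then have "u j < u i" using partition_antimono[OF pu, of i j] assms(4) by simp
  then show ?thesis using gaps_dominate_telescope[OF x, of i j] assms(4) by simp
qed

text \<open>The columns are read off from \<open>f y = max\<^sub>i (u i - (x i - y))\<close>: \<open>f\<close> starts at 0 and
  grows by at most one per step, so it counts the points of a set of columns, and the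
  telescoped gap inequality makes its value at \<open>y = x i\<close> equal to \<open>u i\<close>.\<close>

lemma column_selection:
  assumes pu: "partition u" and x: "gaps_dominate x u"
  shows "\<exists>C. \<forall>i. count_below C (x i) = u i"
proof -
  obtain N where N: "\<And>i. N \<le> i \<Longrightarrow> u i = 0" using partition_eventually_zero[OF pu] by blast
  define g where "g y i = u i - (x i - y)" for y i
  define f where "f y = Max (g y ` {..N})" for y
  have fin: "finite (g y ` {..N})" "g y ` {..N} \<noteq> {}" for y by auto
  have f0: "f 0 = 0"
    using gaps_dominate_ge[OF pu x] by (simp add: f_def g_def)
  have f_step: "f y \<le> f (Suc y) \<and> f (Suc y) \<le> Suc (f y)" for y
  proof
    have "f y \<in> g y ` {..N}" unfolding f_def by (rule Max_in[OF fin])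
    then obtain i where i: "i \<le> N" "f y = g y i" by auto
    have "g y i \<le> g (Suc y) i" unfolding g_def by simp
    also have "\<dots> \<le> f (Suc y)" unfolding f_def using fin i(1) by simp
    finally show "f y \<le> f (Suc y)" using i(2) by simp
  next
    have "g (Suc y) i \<le> Suc (f y)" if "i \<le> N" for i
    proof -
      have "g y i \<le> f y" unfolding f_def using fin that by simp
      then show ?thesis unfolding g_def by linarith
    qed
    then show "f (Suc y) \<le> Suc (f y)" unfolding f_def using fin by simp
  qed
  have "f (x i) = u i" for i
  proof (rule antisym)
    have "g (x i) j \<le> u i" for j
    proof (cases "j \<le> i")
      case True then show ?thesis using gaps_dominate_telescope[OF x True] unfolding g_def by linarith
    next
      case False then show ?thesis using partition_antimono[OF pu, of i j] unfolding g_def by simp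
    qed
    then show "f (x i) \<le> u i" unfolding f_def using fin by simp
    show "u i \<le> f (x i)"
    proof (cases "i \<le> N")
      case True
      then have "g (x i) i \<in> g (x i) ` {..N}" by simp
      then show ?thesis unfolding f_def using fin by (simp add: g_def Max_ge_iff)
    qed (simp add: N)
  qed
  then show ?thesis using count_below_jumps[of f, OF f0 f_step] by metis
qed

lemma contains_imp_gap_chain:
  assumes pa: "partition a" and pu: "partition u" and "contains a u"
  shows "gap_chain a u"
proof -
  obtain r C where r: "strict_mono_on {i. 0 < u i} r"
    and C: "\<And>i. 0 < u i \<Longrightarrow> count_below C (a (r i)) = u i"
    using contains_imp_rows_columns[OF assms(3)] by blast
  define x where "x i = (if 0 < u i then a (r i) else 0)" for i
  obtain z where "a z = 0" using partition_zero_beyond[OF pa] by blast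
  then have "range x \<subseteq> range a" unfolding x_def by (auto intro: range_eqI)
  moreover have "x (Suc i) + u i \<le> x i + u (Suc i)" for i
  proof (cases "0 < u (Suc i)")
    case True
    then have ui: "0 < u i" using partition_antimono[OF pu, of i "Suc i"] by simp
    then have "r i < r (Suc i)" using r True by (simp add: strict_mono_onD)
    then have le: "a (r (Suc i)) \<le> a (r i)" using partition_antimono[OF pa] by simp
    show ?thesis using count_below_diff_le[OF le, of C] C[OF ui] C[OF True] ui True le
      by (simp add: x_def)
  next
    case False
    then show ?thesis using count_below_le[of C "a (r i)"] C[of i] by (auto simp: x_def)
  qed
  ultimately show ?thesis unfolding gap_chain_def gaps_dominate_def by blast
qed

lemma gap_chain_imp_contains:
  assumes pa: "partition a" and pu: "partition u" and su: "strict u" and "gap_chain a u"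
  shows "contains a u"
proof -
  obtain x where "range x \<subseteq> range a" and x: "gaps_dominate x u"
    using assms(4) unfolding gap_chain_def by blast
  then have "\<forall>i. \<exists>j. a j = x i" by (metis rangeE range_subsetD)
  then obtain r where ar: "\<And>i. a (r i) = x i" by metis
  have "strict_mono_on {i. 0 < u i} r"
  proof (rule strict_mono_onI)
    fix i j assume "i \<in> {i. 0 < u i}" "j \<in> {i. 0 < u i}" "i < j"
    then have "a (r j) < a (r i)" using gaps_dominate_strict[OF pu su x] ar by simp
    then show "r i < r j" using partition_antimono[OF pa, of "r j" "r i"] by (meson not_le)
  qed
  moreover obtain C where "\<And>i. count_below C (x i) = u i" using column_selection[OF pu x] by blast
  ultimately show ?thesis using rows_columns_imp_contains[OF pu] ar by metis
qed

lemma contains_iff_gap_chain: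
  "partition a \<Longrightarrow> partition u \<Longrightarrow> strict u \<Longrightarrow> contains a u \<longleftrightarrow> gap_chain a u"
  using contains_imp_gap_chain gap_chain_imp_contains by blast

lemma weight_pos_iff:
  assumes pa: "partition a"
  shows "0 < weight a \<longleftrightarrow> 0 < a 0"
proof
  assume w: "0 < weight a"
  show "0 < a 0"
  proof (rule ccontr)
    assume "\<not> 0 < a 0"
    then have "a i = 0" for i using partition_antimono[OF pa, of 0 i] by simp
    then show False using w by (simp add: weight_def)
  qed
next
  assume a0: "0 < a 0"
  have "a 0 \<le> weight a"
    unfolding weight_def using pa a0 by (intro member_le_sum) (auto simp: partition_def)
  then show "0 < weight a" using a0 by simp
qed

lemma partition_psum_rect_1_1:
  assumes pu: "partition u"
  shows "partition (psum u (rect 1 1))"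
proof -
  have "psum u (rect 1 1) j \<le> psum u (rect 1 1) i" if "i \<le> j" for i j
    using that partition_antimono[OF pu, of i j] partition_antimono[OF pu, of 0 j]
    by (simp add: psum_def rect_def)
  moreover have "{i. psum u (rect 1 1) i \<noteq> 0} \<subseteq> insert 0 {i. u i \<noteq> 0}"
    by (auto simp: psum_def rect_def)
  then have "finite {i. psum u (rect 1 1) i \<noteq> 0}"
    using pu by (auto simp: partition_def intro: finite_subset)
  ultimately show ?thesis unfolding partition_def by blast
qed

lemma strict_psum_rect_1_1:
  assumes pu: "partition u" and su: "strict u"
  shows "strict (psum u (rect 1 1))"
  unfolding strict_def
proof (intro allI impI)
  fix i j assume h: "i \<noteq> j \<and> 0 < psum u (rect 1 1) i \<and> 0 < psum u (rect 1 1) j"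
  show "psum u (rect 1 1) i \<noteq> psum u (rect 1 1) j"
  proof (cases "i = 0 \<or> j = 0")
    case True
    then show ?thesis using h partition_antimono[OF pu, of 0 i] partition_antimono[OF pu, of 0 j]
      by (auto simp: psum_def rect_def)
  next
    case False
    then show ?thesis using h su by (simp add: psum_def rect_def strict_def)
  qed
qed

lemma partition_bar:
  assumes pu: "partition u"
  shows "partition (bar u)"
proof -
  have "bar u j \<le> bar u i" if "i \<le> j" for i j
    using that partition_antimono[OF pu, of "i - 1" "j - 1"] partition_antimono[OF pu, of 0 "j - 1"]
    by (simp add: bar_def)
  moreover have "{i. bar u i \<noteq> 0} \<subseteq> insert 0 (Suc ` {i. u i \<noteq> 0})"
  proof
    fix i assume "i \<in> {i. bar u i \<noteq> 0}"
    then show "i \<in> insert 0 (Suc ` {i. u i \<noteq> 0})" by (cases i) (auto simp: bar_def)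
  qed
  then have "finite {i. bar u i \<noteq> 0}"
    using pu by (auto simp: partition_def intro: finite_subset)
  ultimately show ?thesis unfolding partition_def by blast
qed

lemma strict_bar:
  assumes pu: "partition u" and su: "strict u"
  shows "strict (bar u)"
  unfolding strict_def
proof (intro allI impI)
  fix i j assume h: "i \<noteq> j \<and> 0 < bar u i \<and> 0 < bar u j"
  show "bar u i \<noteq> bar u j"
  proof (cases "i = 0 \<or> j = 0")
    case True
    then show ?thesis
      using h partition_antimono[OF pu, of 0 "i - 1"] partition_antimono[OF pu, of 0 "j - 1"]
      by (auto simp: bar_def)
  next
    case False
    then have "i - 1 \<noteq> j - 1" using h by arith
    then show ?thesis using h su False by (simp add: bar_def strict_def)
  qed
qed

lemma Q_iff_gap_chain:
  assumes "partition t" "strict t" "partition u" "strict u"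
  shows "b \<in> Q t u \<longleftrightarrow> partition b \<and> 0 < weight b \<and> gap_chain b t \<and> \<not> gap_chain b u"
  using contains_iff_gap_chain[of b t] contains_iff_gap_chain[of b u] assms unfolding Q_def by blast

section \<open>Replacing the top rows\<close>

definition replace_top :: "(nat \<Rightarrow> nat) \<Rightarrow> nat \<Rightarrow> nat \<Rightarrow> nat \<Rightarrow> nat" where
  "replace_top a m v = (\<lambda>i. if i < m then v else a i)"

lemma range_replace_top: "0 < m \<Longrightarrow> range (replace_top a m v) = insert v (a ` {m..})"
proof (intro equalityI subsetI)
  fix z assume "z \<in> range (replace_top a m v)"
  then show "z \<in> insert v (a ` {m..})" by (auto simp: replace_top_def split: if_splits)
next
  fix z assume m: "0 < m" and "z \<in> insert v (a ` {m..})"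
  then consider "z = replace_top a m v 0" | j where "m \<le> j" "z = replace_top a m v j"
    by (auto simp: replace_top_def)
  then show "z \<in> range (replace_top a m v)" by cases auto
qed

lemma replace_top_le: "partition a \<Longrightarrow> a m \<le> v \<Longrightarrow> replace_top a m v i \<le> v"
  using partition_antimono[of a m i] by (auto simp: replace_top_def)

lemma partition_replace_top:
  assumes pa: "partition a" and v: "a m \<le> v"
  shows "partition (replace_top a m v)"
proof -
  have "replace_top a m v j \<le> replace_top a m v i" if "i \<le> j" for i j
    using that partition_antimono[OF pa, of i j] replace_top_le[OF pa v, of j]
    by (auto simp: replace_top_def)
  moreover have "{i. replace_top a m v i \<noteq> 0} \<subseteq> {..<m} \<union> {i. a i \<noteq> 0}"
    by (auto simp: replace_top_def)
  then have "finite {i. replace_top a m v i \<noteq> 0}"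
    using pa by (auto simp: partition_def intro: finite_subset)
  ultimately show ?thesis unfolding partition_def by blast
qed

lemma range_subset_replace_top_iff:
  "0 < m \<Longrightarrow> range x \<subseteq> range (replace_top a m v) \<longleftrightarrow> (\<forall>i. x i = v \<or> x i \<in> a ` {m..})"
  by (auto simp: range_replace_top)

lemma range_subset_replace_top_le:
  assumes "partition a" "a m \<le> v" "range x \<subseteq> range (replace_top a m v)"
  shows "x i \<le> v"
proof -
  obtain j where "x i = replace_top a m v j" using range_subsetD[OF assms(3)] by blast
  then show ?thesis using replace_top_le[OF assms(1,2)] by simp
qed

lemma partition_zero_in_tail: "partition a \<Longrightarrow> 0 \<in> a ` {m..}"
  using partition_zero_beyond[of a m] by (metis atLeast_iff image_eqI)

lemma gap_chain_level_mono:
  assumes pa: "partition a" and pU: "partition U" and m: "0 < m" and v: "a m \<le> v" "v \<le> v'"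
    and "gap_chain (replace_top a m v) U"
  shows "gap_chain (replace_top a m v') U"
proof -
  obtain x where xr: "range x \<subseteq> range (replace_top a m v)" and x: "gaps_dominate x U"
    using assms(6) unfolding gap_chain_def by blast
  define y where "y i = (if x i = v then v' else x i)" for i
  have "\<forall>i. x i = v \<or> x i \<in> a ` {m..}" using xr by (simp add: range_subset_replace_top_iff[OF m])
  then have "\<forall>i. y i = v' \<or> y i \<in> a ` {m..}" by (simp add: y_def) blast
  then have "range y \<subseteq> range (replace_top a m v')" by (simp add: range_subset_replace_top_iff[OF m])
  moreover have "gaps_dominate y U"
    unfolding gaps_dominate_def
  proof
    fix i
    have "x (Suc i) \<le> x i" using gaps_dominate_antimono[OF pU x] by simp
    moreover have "x i \<le> v" using range_subset_replace_top_le[OF pa v(1) xr] .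
    moreover have "x (Suc i) + U i \<le> x i + U (Suc i)" by (rule gaps_dominateD[OF x])
    ultimately show "y (Suc i) + U i \<le> y i + U (Suc i)"
      using v(2) by (cases "x i = v"; cases "x (Suc i) = v") (simp_all add: y_def)
  qed
  ultimately show ?thesis unfolding gap_chain_def by (intro exI[of _ y] conjI)
qed

lemma gap_chain_raise_level:
  assumes pa: "partition a" and pu: "partition u" and su: "strict u" and m: "0 < m"
    and v: "a m \<le> v" and "gap_chain (replace_top a m v) u"
  shows "gap_chain (replace_top a m (Suc v)) (psum u (rect 1 1))"
proof -
  obtain x where xr: "range x \<subseteq> range (replace_top a m v)" and x: "gaps_dominate x u"
    using assms(6) unfolding gap_chain_def by blast
  have xs: "\<forall>i. x i = v \<or> x i \<in> a ` {m..}" using xr by (simp add: range_subset_replace_top_iff[OF m])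
  have x0: "x 0 \<le> v" using range_subset_replace_top_le[OF pa v xr] .
  have gap0: "x 1 + u 0 \<le> x 0 + u 1" using gaps_dominateD[OF x, of 0] by simp
  have x_below: "x i < v" if "0 < u 0" "1 \<le> i" for i
  proof -
    have "x 1 < v"
    proof (rule ccontr)
      assume "\<not> x 1 < v"
      then have "u 0 \<le> u 1" using gap0 x0 by simp
      moreover have "u 1 \<le> u 0" using partition_antimono[OF pu] by simp
      ultimately show False using su \<open>0 < u 0\<close> unfolding strict_def by (metis One_nat_def le_antisym zero_neq_one)
    qed
    then show ?thesis using gaps_dominate_antimono[OF pu x that(2)] by simp
  qed
  text \<open>Only for \<open>0 < u 0\<close> does strictness keep the later entries below \<open>v\<close>;
    for \<open>u = 0\<close> zeros will do.\<close>
  define y where "y i = (if i = 0 then Suc v else if 0 < u 0 then x i else 0)" for i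
  have "\<forall>i. y i = Suc v \<or> y i \<in> a ` {m..}"
  proof
    fix i
    show "y i = Suc v \<or> y i \<in> a ` {m..}"
    proof (cases "i = 0 \<or> u 0 = 0")
      case True then show ?thesis using partition_zero_in_tail[OF pa] by (auto simp: y_def)
    next
      case False then show ?thesis using xs x_below[of i] by (auto simp: y_def)
    qed
  qed
  then have "range y \<subseteq> range (replace_top a m (Suc v))"
    by (simp add: range_subset_replace_top_iff[OF m])
  moreover have "gaps_dominate y (psum u (rect 1 1))"
    unfolding gaps_dominate_def
  proof
    fix i
    have "x (Suc i) + u i \<le> x i + u (Suc i)" by (rule gaps_dominateD[OF x])
    moreover have "u i = 0" if "u 0 = 0" using partition_antimono[OF pu, of 0 i] that by simp
    moreover have "u (Suc i) = 0" if "u 0 = 0" using partition_antimono[OF pu, of 0 "Suc i"] that by simp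
    ultimately show "y (Suc i) + psum u (rect 1 1) i \<le> y i + psum u (rect 1 1) (Suc i)"
      using gap0 x0 by (cases "i = 0") (auto simp: y_def psum_def rect_def)
  qed
  ultimately show ?thesis unfolding gap_chain_def by (intro exI[of _ y] conjI)
qed

lemma gap_chain_lower_level:
  assumes pa: "partition a" and pu: "partition u" and m: "0 < m" and v: "a m \<le> v"
    and "gap_chain (replace_top a m (Suc v)) (psum u (rect 1 1))"
  shows "gap_chain (replace_top a m v) u"
proof -
  obtain x where xr: "range x \<subseteq> range (replace_top a m (Suc v))"
    and x: "gaps_dominate x (psum u (rect 1 1))"
    using assms(5) unfolding gap_chain_def by blast
  have xs: "\<forall>i. x i = Suc v \<or> x i \<in> a ` {m..}"
    using xr by (simp add: range_subset_replace_top_iff[OF m])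
  have "x 0 \<le> Suc v" using range_subset_replace_top_le[OF pa _ xr] v by simp
  moreover have "x 1 + Suc (u 0) \<le> x 0 + u 1" using gaps_dominateD[OF x, of 0] by (simp add: psum_def rect_def)
  ultimately have gap0: "x 1 + u 0 \<le> v + u 1" by simp
  then have "x 1 \<le> v" using partition_antimono[OF pu, of 0 1] by simp
  then have x_below: "x i \<le> v" if "1 \<le> i" for i
    using gaps_dominate_antimono[OF partition_psum_rect_1_1[OF pu] x that] by simp
  define y where "y i = (if i = 0 then v else x i)" for i
  have "\<forall>i. y i = v \<or> y i \<in> a ` {m..}"
    using xs x_below by (simp add: y_def) (metis One_nat_def Suc_leI Suc_n_not_le_n neq0_conv)
  then have "range y \<subseteq> range (replace_top a m v)"
    by (simp add: range_subset_replace_top_iff[OF m])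
  moreover have "gaps_dominate y u"
    unfolding gaps_dominate_def
  proof
    fix i
    have "x (Suc i) + psum u (rect 1 1) i \<le> x i + psum u (rect 1 1) (Suc i)"
      by (rule gaps_dominateD[OF x])
    then show "y (Suc i) + u i \<le> y i + u (Suc i)"
      using gap0 by (cases "i = 0") (auto simp: y_def psum_def rect_def)
  qed
  ultimately show ?thesis unfolding gap_chain_def by (intro exI[of _ y] conjI)
qed

lemma gap_chain_bar_of_lowest_level:
  assumes pa: "partition a" and pu: "partition u" and m: "0 < m" and am: "a m < a 0"
    and "gap_chain (replace_top a m (Suc (a m))) (psum u (rect 1 1))"
  shows "gap_chain a (bar u)"
proof -
  obtain x where xr: "range x \<subseteq> range (replace_top a m (Suc (a m)))"
    and x: "gaps_dominate x (psum u (rect 1 1))"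
    using assms(5) unfolding gap_chain_def by blast
  have xs: "\<forall>i. x i = Suc (a m) \<or> x i \<in> a ` {m..}"
    using xr by (simp add: range_subset_replace_top_iff[OF m])
  have x0: "x 0 \<le> Suc (a m)" using range_subset_replace_top_le[OF pa _ xr] by simp
  have gap0: "x 1 + Suc (u 0) \<le> x 0 + u 1" using gaps_dominateD[OF x, of 0] by (simp add: psum_def rect_def)
  then have "x 1 < x 0" using partition_antimono[OF pu, of 0 1] by simp
  then have x_below: "x i \<le> a m" if "1 \<le> i" for i
    using gaps_dominate_antimono[OF partition_psum_rect_1_1[OF pu] x that] x0 by simp
  text \<open>Row 0 of \<open>a\<close> is used for the new first part of \<open>bar u\<close>; the old chain is
    shifted down by one, with its first entry cut down to a value of \<open>a\<close>.\<close>
  define y where "y i = (if i = 0 then a 0 else if i = 1 then min (x 0) (a m) else x (i - 1))" for i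
  have "y i \<in> range a" for i
  proof -
    consider "i = 0" | "i = 1" | "2 \<le> i" by linarith
    then show ?thesis
    proof cases
      case 3
      then have "x (i - 1) \<le> a m" using x_below by simp
      then have "x (i - 1) \<in> a ` {m..}" using xs[rule_format, of "i - 1"] by auto
      then show ?thesis using 3 by (auto simp: y_def)
    qed (use xs[rule_format, of 0] in \<open>auto simp: y_def min_def\<close>)
  qed
  moreover have "gaps_dominate y (bar u)"
    unfolding gaps_dominate_def
  proof
    fix i
    consider "i = 0" | "i = 1" | k where "i = Suc (Suc k)" by (metis One_nat_def not0_implies_Suc)
    then show "y (Suc i) + bar u i \<le> y i + bar u (Suc i)"
    proof cases
      case 3
      have "x (Suc (Suc k)) + psum u (rect 1 1) (Suc k) \<le> x (Suc k) + psum u (rect 1 1) (Suc (Suc k))"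
        by (rule gaps_dominateD[OF x])
      then show ?thesis using 3 by (simp add: y_def bar_def psum_def rect_def)
    qed (use am gap0 x0 in \<open>auto simp: y_def bar_def\<close>)
  qed
  ultimately show ?thesis unfolding gap_chain_def by (intro exI[of _ y] conjI) auto
qed

lemma replace_top_in_Q_iff:
  assumes pa: "partition a" and pu: "partition u" and su: "strict u" and m: "0 < m" and v: "a m < v"
  shows "replace_top a m v \<in> Q u (psum u (rect 1 1)) \<longleftrightarrow>
    gap_chain (replace_top a m v) u \<and> \<not> gap_chain (replace_top a m v) (psum u (rect 1 1))"
proof -
  have "partition (replace_top a m v)" using partition_replace_top[OF pa] v by simp
  moreover have "0 < weight (replace_top a m v)"
    using weight_pos_iff[OF calculation] m v by (simp add: replace_top_def)
  ultimately show ?thesis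
    using Q_iff_gap_chain[OF pu su partition_psum_rect_1_1[OF pu] strict_psum_rect_1_1[OF pu su]] by simp
qed

lemma replace_top_in_Q_at_most_once:
  assumes pa: "partition a" and pu: "partition u" and su: "strict u" and m: "0 < m"
    and v: "a m < v" "v < v'" and "replace_top a m v \<in> Q u (psum u (rect 1 1))"
  shows "replace_top a m v' \<notin> Q u (psum u (rect 1 1))"
proof -
  have "gap_chain (replace_top a m v) u" using assms(7) replace_top_in_Q_iff[OF pa pu su m v(1)] by blast
  then have "gap_chain (replace_top a m (Suc v)) (psum u (rect 1 1))"
    using gap_chain_raise_level[OF pa pu su m] v by simp
  moreover have "a m \<le> Suc v" "Suc v \<le> v'" using v by simp_all
  ultimately have "gap_chain (replace_top a m v') (psum u (rect 1 1))"
    using gap_chain_level_mono[OF pa partition_psum_rect_1_1[OF pu] m] by blast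
  then show ?thesis using replace_top_in_Q_iff[OF pa pu su m] v by simp
qed

lemma replace_top_in_Q_exists:
  assumes pa: "partition a" and pu: "partition u" and su: "strict u" and m: "0 < m"
    and am: "a m < a 0" and top: "\<forall>i<m. a i = a 0"
    and cu: "contains a u" and nb: "\<not> contains a (bar u)"
  shows "\<exists>v. a m < v \<and> v \<le> a 0 \<and> replace_top a m v \<in> Q u (psum u (rect 1 1))"
proof -
  have "replace_top a m (a 0) = a"
  proof
    fix i show "replace_top a m (a 0) i = a i" using top[rule_format, of i] by (simp add: replace_top_def)
  qed
  then have a0: "a m < a 0 \<and> gap_chain (replace_top a m (a 0)) u"
    using am contains_imp_gap_chain[OF pa pu cu] by simp
  define v where "v = (LEAST v. a m < v \<and> gap_chain (replace_top a m v) u)"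
  have v: "a m < v \<and> gap_chain (replace_top a m v) u" "v \<le> a 0"
    unfolding v_def using a0 by (rule LeastI, rule Least_le)
  have least: "v \<le> v'" if "a m < v' \<and> gap_chain (replace_top a m v') u" for v'
    unfolding v_def using that by (rule Least_le)
  have "\<not> gap_chain (replace_top a m v) (psum u (rect 1 1))"
  proof
    assume c: "gap_chain (replace_top a m v) (psum u (rect 1 1))"
    obtain v0 where v0: "v = Suc v0" "a m \<le> v0" using v(1) by (cases v) auto
    show False
    proof (cases "v0 = a m")
      case True
      then have "gap_chain a (bar u)" using gap_chain_bar_of_lowest_level[OF pa pu m am] c v0 by simp
      then show False using nb gap_chain_imp_contains[OF pa partition_bar[OF pu] strict_bar[OF pu su]] by blast
    next
      case False
      then have "gap_chain (replace_top a m v0) u" using gap_chain_lower_level[OF pa pu m] c v0 by simp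
      then show False using least[of v0] v0 False by simp
    qed
  qed
  then show ?thesis using v replace_top_in_Q_iff[OF pa pu su m] by blast
qed

lemma ex1_replace_top_in_Q:
  assumes pa: "partition a" and pu: "partition u" and su: "strict u" and m: "0 < m"
    and am: "a m < a 0" and top: "\<forall>i<m. a i = a 0"
    and cu: "contains a u" and nb: "\<not> contains a (bar u)"
  shows "\<exists>!v. a m < v \<and> v \<le> a 0 \<and> replace_top a m v \<in> Q u (psum u (rect 1 1))"
proof (rule ex_ex1I)
  show "\<exists>v. a m < v \<and> v \<le> a 0 \<and> replace_top a m v \<in> Q u (psum u (rect 1 1))"
    by (rule replace_top_in_Q_exists[OF assms])
next
  fix v v' assume "a m < v \<and> v \<le> a 0 \<and> replace_top a m v \<in> Q u (psum u (rect 1 1))"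
    and "a m < v' \<and> v' \<le> a 0 \<and> replace_top a m v' \<in> Q u (psum u (rect 1 1))"
  then show "v = v'" using replace_top_in_Q_at_most_once[OF pa pu su m]
    by (cases v v' rule: linorder_cases) auto
qed

lemma mult_top_rows:
  assumes pa: "partition a" and a0: "0 < a 0"
  shows "0 < mult a" and "\<forall>i<mult a. a i = a 0" and "a (mult a) < a 0"
proof -
  obtain z where "a z = 0" using partition_zero_beyond[OF pa] by blast
  then have "\<exists>i. a i \<noteq> a 0" using a0 by (intro exI[of _ z]) simp
  define m where "m = (LEAST i. a i \<noteq> a 0)"
  have "a m \<noteq> a 0" unfolding m_def by (rule LeastI_ex) fact
  then have "a i \<noteq> a 0" if "m \<le> i" for i
    using partition_antimono[OF pa that] partition_antimono[OF pa, of 0 m] by simp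
  moreover have top: "a i = a 0" if "i < m" for i using not_less_Least[OF that[unfolded m_def]] by simp
  ultimately have "{i. a i = a 0} = {..<m}" by (auto simp: not_less[symmetric])
  then have mult: "mult a = m" by (simp add: mult_def)
  show "0 < mult a" using mult \<open>a m \<noteq> a 0\<close> by (cases m) auto
  show "\<forall>i<mult a. a i = a 0" using mult top by blast
  show "a (mult a) < a 0" using mult \<open>a m \<noteq> a 0\<close> partition_antimono[OF pa, of 0 m] by simp
qed

lemma psum_rect_eq_replace_top_iff:
  assumes m: "0 < m" and b: "\<forall>i<m. b i = b 0"
  shows "a = psum b (rect w m) \<longleftrightarrow>
    (\<forall>i<m. a i = a 0) \<and> a 0 = b 0 + w \<and> b = replace_top a m (b 0)"
proof
  assume "a = psum b (rect w m)"
  then have a: "a i = b i + (if i < m then w else 0)" for i by (simp add: psum_def rect_def)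
  have "a i = a 0" if "i < m" for i using a[of i] a[of 0] m b[rule_format, OF that] that by simp
  moreover have "a 0 = b 0 + w" using a[of 0] m by simp
  moreover have "b = replace_top a m (b 0)"
  proof
    fix i show "b i = replace_top a m (b 0) i" using a[of i] b[rule_format, of i] by (simp add: replace_top_def)
  qed
  ultimately show "(\<forall>i<m. a i = a 0) \<and> a 0 = b 0 + w \<and> b = replace_top a m (b 0)" by blast
next
  assume h: "(\<forall>i<m. a i = a 0) \<and> a 0 = b 0 + w \<and> b = replace_top a m (b 0)"
  show "a = psum b (rect w m)"
  proof
    fix i
    have "b i = replace_top a m (b 0) i" using h by metis
    then show "a i = psum b (rect w m) i"
      using h[THEN conjunct1, rule_format, of i] h by (cases "i < m") (simp_all add: psum_def rect_def replace_top_def)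
  qed
qed

lemma decomposition_iff_level:
  assumes pa: "partition a" and m: "0 < m" and top: "\<forall>i<m. a i = a 0"
  shows "partition b \<and> (\<forall>i<m. b i = b 0) \<and> b m < b 0 \<and> b \<in> B \<and> a = psum b (rect w m) \<longleftrightarrow>
    (\<exists>v. (a m < v \<and> v \<le> a 0 \<and> replace_top a m v \<in> B) \<and> b = replace_top a m v \<and> w = a 0 - v)"
proof
  assume "partition b \<and> (\<forall>i<m. b i = b 0) \<and> b m < b 0 \<and> b \<in> B \<and> a = psum b (rect w m)"
  then have b: "\<forall>i<m. b i = b 0" "b m < b 0" "b \<in> B" and "a = psum b (rect w m)" by blast+
  then have w: "a 0 = b 0 + w" and b_eq: "b = replace_top a m (b 0)"
    using psum_rect_eq_replace_top_iff[OF m b(1)] by blast+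
  have "a m < b 0" using b(2) fun_cong[OF b_eq, of m] by (simp add: replace_top_def)
  moreover have "replace_top a m (b 0) \<in> B" using b(3) b_eq by metis
  moreover have "b 0 \<le> a 0" "w = a 0 - b 0" using w by simp_all
  ultimately show "\<exists>v. (a m < v \<and> v \<le> a 0 \<and> replace_top a m v \<in> B) \<and> b = replace_top a m v \<and> w = a 0 - v"
    using b_eq by blast
next
  assume "\<exists>v. (a m < v \<and> v \<le> a 0 \<and> replace_top a m v \<in> B) \<and> b = replace_top a m v \<and> w = a 0 - v"
  then obtain v where v: "a m < v" "v \<le> a 0" "replace_top a m v \<in> B"
    and b: "b = replace_top a m v" and w: "w = a 0 - v" by blast
  have v0: "b 0 = v" and top_b: "\<forall>i<m. b i = b 0" using m by (simp_all add: b replace_top_def)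
  have "a 0 = v + (a 0 - v)" using v(2) by simp
  then have "a = psum b (rect w m)"
    unfolding psum_rect_eq_replace_top_iff[OF m top_b] v0 w using top b by blast
  moreover have "partition b" using partition_replace_top[OF pa] v(1) b by simp
  moreover have "b m < b 0" using v(1) v0 by (simp add: b replace_top_def)
  moreover have "b \<in> B" using v(3) b by simp
  ultimately show "partition b \<and> (\<forall>i<m. b i = b 0) \<and> b m < b 0 \<and> b \<in> B \<and> a = psum b (rect w m)"
    using top_b by blast
qed

lemma ex1_pair_of_ex1_parameter:
  assumes "\<And>b w. P b w \<longleftrightarrow> (\<exists>v. R v \<and> b = f v \<and> w = g v)" and "\<exists>!v. R v"
  shows "\<exists>!(b, w). P b w"
proof -
  obtain v where v: "R v" and unique: "\<And>v'. R v' \<Longrightarrow> v' = v" using assms(2) by blast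
  show ?thesis
  proof (rule ex1I[of _ "(f v, g v)"])
    show "case (f v, g v) of (b, w) \<Rightarrow> P b w" using assms(1) v by auto
  next
    fix p assume "case p of (b, w) \<Rightarrow> P b w"
    then obtain v' where "R v'" and "p = (f v', g v')" using assms(1) by (cases p) auto
    then show "p = (f v, g v)" using unique by simp
  qed
qed

theorem mainTheorem11:
  fixes u a :: "nat \<Rightarrow> nat"
  assumes "partition u" and "strict u" and "a \<in> Q u (bar u)"
  shows "\<exists>!(b, w). partition b \<and> (\<forall>i < mult a. b i = b 0) \<and> b (mult a) < b 0
            \<and> b \<in> Q u (psum u (rect 1 1))
            \<and> a = psum b (rect w (mult a))"
proof -
  have pa: "partition a" and cu: "contains a u" and nb: "\<not> contains a (bar u)"
    and "0 < weight a" using assms(3) by (auto simp: Q_def)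
  then have "0 < a 0" using weight_pos_iff by blast
  note top = mult_top_rows[OF pa this]
  show ?thesis
    using decomposition_iff_level[OF pa top(1,2)]
      ex1_replace_top_in_Q[OF pa assms(1,2) top(1,3,2) cu nb]
    by (rule ex1_pair_of_ex1_parameter)
qed

end
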